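(* Let $(X,Y)\sim\rho^{XY}$ be random vectors in $\mathbb R^d$. Define $\Phi_{\mathrm{ext}}(x)=\Phi(x)$ for $x\ge0$ and $\Phi_{\mathrm{ext}}(x)=+\infty$ for $x<0$, and let $\Phi^*_{\mathrm{ext}}(y)=\sup_{x\in\mathbb R}(xy-\Phi_{\mathrm{ext}}(x))$ be its convex conjugate. Assume there exists $0<\xi<\infty$ such that for all $\theta\in\mathbb R^d$, $$\inf_{a\in\mathbb R}\Big\{\mathbb E_{\rho^Y}\big[\Phi^*_{\mathrm{ext}}(\langle\theta,Y-\mathbb E[Y]\rangle-a)\big]+a\Big\}\le\frac{\|\theta\|^2\xi^2}{2}.$$ Then $$\|\mathrm{Cov}(X,Y)\|_{\mathrm{op}}\le\xi\sqrt{2\,\|\mathrm{Cov}(X,X)\|_{\mathrm{op}}\,\mathsf{MI}_\Phi(\rho^{XY})},$$ where $\mathrm{Cov}(X,Y)=\mathbb E[(X-\mathbb EX)(Y-\mathbb EY)^\top]$.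
   Context: Throughout, $\Phi:[0,\infty)\to\mathbb R$ is a twice-differentiable strictly convex function with $\Phi(1)=0$. For probability distributions $\mu,\nu$ with $\mu\ll\nu$, the $\Phi$-divergence is $\mathsf D_\Phi(\mu\|\nu)=\int\Phi\big(\frac{d\mu}{d\nu}\big)\,d\nu$, and $\mathsf D_\Phi(\mu\|\nu)=+\infty$ if $\mu\not\ll\nu$. For a random pair $(X,Y)$ with joint law $\rho^{XY}$ and marginals $\rho^X,\rho^Y$, the $\Phi$-mutual information is $\mathsf{MI}_\Phi(\rho^{XY})=\mathsf D_\Phi(\rho^{XY}\|\rho^X\otimes\rho^Y)=\mathbb E_{x\sim\rho^X}[\mathsf D_\Phi(\rho^{Y\mid X=x}\|\rho^Y)]$. $\|\cdot\|_{\mathrm{op}}$ is the operator norm. *)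

theory Defs
  imports "HOL-Analysis.Analysis" "HOL-Probability.Probability"
begin

definition strictly_convex_on :: "real set \<Rightarrow> (real \<Rightarrow> real) \<Rightarrow> bool" where
  "strictly_convex_on S f \<longleftrightarrow>
     (\<forall>x\<in>S. \<forall>y\<in>S. x \<noteq> y \<longrightarrow> (\<forall>t. 0 < t \<and> t < 1 \<longrightarrow>
        f (t * x + (1 - t) * y) < t * f x + (1 - t) * f y))"

definition admissible_Phi :: "(real \<Rightarrow> real) \<Rightarrow> bool" where
  "admissible_Phi Phi \<longleftrightarrow>
     (\<exists>Phi' Phi''. (\<forall>x\<ge>0. (Phi has_real_derivative Phi' x) (at x within {0..}) \<and>
                           (Phi' has_real_derivative Phi'' x) (at x within {0..})))
     \<and> strictly_convex_on {0..} Phi \<and> Phi 1 = 0"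

definition ext_integral :: "'a measure \<Rightarrow> ('a \<Rightarrow> ereal) \<Rightarrow> ereal" where
  "ext_integral M f =
     enn2ereal (\<integral>\<^sup>+ x. e2ennreal (max (f x) 0) \<partial>M)
     - enn2ereal (\<integral>\<^sup>+ x. e2ennreal (max (- f x) 0) \<partial>M)"

text \<open>Phi-divergence D_Phi(mu || nu); mu \<ll> nu is absolutely_continuous nu mu.\<close>
definition Phi_div :: "(real \<Rightarrow> real) \<Rightarrow> 'a measure \<Rightarrow> 'a measure \<Rightarrow> ereal" where
  "Phi_div Phi mu nu =
     (if sets mu = sets nu \<and> absolutely_continuous nu mu
      then ext_integral nu (\<lambda>x. ereal (Phi (enn2real (RN_deriv nu mu x))))
      else \<infinity>)"

definition Phi_MI :: "(real \<Rightarrow> real) \<Rightarrow> ('a::topological_space \<times> 'b::topological_space) measure \<Rightarrow> ereal" where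
  "Phi_MI Phi rho = Phi_div Phi rho (distr rho borel fst \<Otimes>\<^sub>M distr rho borel snd)"

definition Phi_ext :: "(real \<Rightarrow> real) \<Rightarrow> real \<Rightarrow> ereal" where
  "Phi_ext Phi x = (if x \<ge> 0 then ereal (Phi x) else \<infinity>)"

definition Phi_ext_conj :: "(real \<Rightarrow> real) \<Rightarrow> real \<Rightarrow> ereal" where
  "Phi_ext_conj Phi y = (SUP x\<in>(UNIV::real set). ereal (x * y) - Phi_ext Phi x)"

definition cross_cov :: "('a \<times> 'b) measure \<Rightarrow> ('a \<times> 'b \<Rightarrow> real^'n) \<Rightarrow> ('a \<times> 'b \<Rightarrow> real^'m)
     \<Rightarrow> real^'m^'n" where
  "cross_cov rho U V = (\<chi> i j. \<integral>z. ((U z - (\<integral>w. U w \<partial>rho)) $ i) *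
                                     ((V z - (\<integral>w. V w \<partial>rho)) $ j) \<partial>rho)"

end

theory Submission
  imports Defs
begin

text \<open>
  Put \<open>w = \<langle>u, Y - E Y\<rangle>\<close>. The variational lower bound
  \<open>D\<^sub>\<Phi>(\<mu>\<parallel>\<nu>) \<ge> E\<^sub>\<mu> g - E\<^sub>\<nu> \<Phi>\<^sup>*(g)\<close>, for the joint law \<open>\<mu>\<close> and the product \<open>\<nu>\<close> of
  the marginals, with \<open>g(x, y) = \<langle>t(x) u, y - E Y\<rangle> - a(x)\<close> and shifts \<open>a(x)\<close> nearly
  attaining the infimum in the hypothesis for \<open>\<theta> = t(x) u\<close>, gives the decoupling inequality
  \<open>E[t(X) w] - MI \<le> \<xi>\<^sup>2 \<parallel>u\<parallel>\<^sup>2 E[t(X)\<^sup>2] / 2\<close> for every square-integrable \<open>t\<close>.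
  The shifts can be chosen measurably when \<open>t\<close> takes countably many values; the general
  case follows by discretising \<open>t\<close>. Taking \<open>t(x) = \<lambda> \<langle>v, x - E X\<rangle>\<close> and optimising over
  \<open>\<lambda>\<close> yields \<open>(v \<bullet> Cov(X,Y) u)\<^sup>2 \<le> 2 \<xi>\<^sup>2 MI \<parallel>u\<parallel>\<^sup>2 (v \<bullet> Cov(X,X) v)\<close>, and
  \<open>v = Cov(X,Y) u\<close> turns this into the operator-norm bound.
\<close>

section \<open>The generator \<open>\<Phi>\<close> and its convex conjugate\<close>

lemma strictly_convex_on_imp_convex_on:
  assumes "convex S" and strict: "strictly_convex_on S f"
  shows "convex_on S f"
proof (rule convex_onI[OF _ \<open>convex S\<close>])
  fix t x y :: real assume t: "0 < t" "t < 1" and xy: "x \<in> S" "y \<in> S"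
  show "f ((1 - t) *\<^sub>R x + t *\<^sub>R y) \<le> (1 - t) * f x + t * f y"
  proof (cases "x = y")
    case False
    have "0 < 1 - t" "1 - t < 1" using t by auto
    with strict xy False have "f ((1 - t) * x + (1 - (1 - t)) * y) < (1 - t) * f x + (1 - (1 - t)) * f y"
      unfolding strictly_convex_on_def by blast
    then show ?thesis by simp
  qed (simp add: algebra_simps)
qed

lemma admissible_Phi_continuous_on:
  assumes "admissible_Phi Phi"
  shows "continuous_on {0..} Phi"
proof -
  from assms obtain Phi' where "\<And>x. 0 \<le> x \<Longrightarrow> (Phi has_real_derivative Phi' x) (at x within {0..})"
    unfolding admissible_Phi_def by blast
  then show ?thesis
    by (auto simp: continuous_on_eq_continuous_within intro: DERIV_continuous)
qed

lemma borel_measurable_comp_continuous_on_nonneg: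
  fixes Phi :: "real \<Rightarrow> real" and f :: "'a \<Rightarrow> real"
  assumes "continuous_on {0..} Phi" and f_meas: "f \<in> borel_measurable M" and "\<And>x. 0 \<le> f x"
  shows "(\<lambda>x. Phi (f x)) \<in> borel_measurable M"
proof -
  have "continuous_on UNIV (\<lambda>x::real. max 0 x)"
    by (intro continuous_on_max continuous_on_const continuous_on_id)
  then have "continuous_on UNIV (\<lambda>x. Phi (max 0 x))"
    by (rule continuous_on_compose2[OF assms(1)]) auto
  then have "(\<lambda>x. Phi (max 0 x)) \<in> borel_measurable borel"
    by (rule borel_measurable_continuous_onI)
  then have "(\<lambda>x. Phi (max 0 (f x))) \<in> borel_measurable M"
    using measurable_compose[OF f_meas] by blast
  then show ?thesis
    using assms(3) by (simp add: max_absorb2)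
qed

lemma admissible_Phi_lower_affine:
  assumes "admissible_Phi Phi"
  obtains c where "0 \<le> c" and "\<And>x. 0 \<le> x \<Longrightarrow> - Phi x \<le> c * (x + 1)"
proof -
  from assms obtain Phi' where
      d: "\<And>x. 0 \<le> x \<Longrightarrow> (Phi has_real_derivative Phi' x) (at x within {0..})"
    and "strictly_convex_on {0..} Phi" and "Phi 1 = 0"
    unfolding admissible_Phi_def by blast
  then have "convex_on {0..} Phi"
    by (intro strictly_convex_on_imp_convex_on) auto
  have "- Phi x \<le> \<bar>Phi' 1\<bar> * (x + 1)" if "0 \<le> x" for x
  proof -
    have "Phi' 1 * (x - 1) \<le> Phi x"
      using convex_on_imp_above_tangent[OF \<open>convex_on {0..} Phi\<close> _ _ _ d[of 1]] \<open>Phi 1 = 0\<close> that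
      by auto
    moreover have "- Phi' 1 * x \<le> \<bar>Phi' 1\<bar> * x"
      using that by (intro mult_right_mono) auto
    ultimately show ?thesis
      using abs_ge_self[of "Phi' 1"] by (simp add: algebra_simps)
  qed
  then show ?thesis
    using that[of "\<bar>Phi' 1\<bar>"] by simp
qed

lemma Phi_ext_conj_ge:
  assumes "0 \<le> x"
  shows "ereal (x * y - Phi x) \<le> Phi_ext_conj Phi y"
  unfolding Phi_ext_conj_def
  by (rule SUP_upper2[of x]) (use assms in \<open>auto simp: Phi_ext_def\<close>)

lemma Phi_ext_conj_fenchel_young:
  assumes "0 \<le> x" and "Phi_ext_conj Phi y \<noteq> \<infinity>"
  shows "x * y \<le> Phi x + enn2real (e2ennreal (Phi_ext_conj Phi y + ereal (Phi 0))) - Phi 0"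
proof -
  have "ereal (x * y - Phi x) \<le> Phi_ext_conj Phi y"
    using assms(1) by (rule Phi_ext_conj_ge)
  moreover have "ereal (- Phi 0) \<le> Phi_ext_conj Phi y"
    using Phi_ext_conj_ge[of 0 y Phi] by simp
  ultimately obtain r where "Phi_ext_conj Phi y = ereal r" "x * y - Phi x \<le> r" "0 \<le> r + Phi 0"
    using assms(2) by (cases "Phi_ext_conj Phi y") auto
  then show ?thesis by simp
qed

lemma Phi_ext_conj_eq_SUP_Rats:
  assumes cont: "continuous_on {0..} Phi"
  shows "Phi_ext_conj Phi y = (SUP q\<in>\<rat> \<inter> {0..}. ereal (q * y - Phi q))"
    (is "_ = ?S")
proof (rule antisym)
  show "?S \<le> Phi_ext_conj Phi y"
    by (rule SUP_least) (auto intro: Phi_ext_conj_ge)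
  have "ereal (x * y - Phi x) \<le> ?S" if "0 \<le> x" for x
  proof -
    have "x \<in> closure (\<rat> \<inter> {0..})"
      unfolding closure_approachable
    proof (intro allI impI)
      fix e :: real assume "0 < e"
      then obtain r where "r \<in> \<rat>" "x < r" "r < x + e"
        using Rats_dense_in_real[of x "x + e"] by auto
      then show "\<exists>r\<in>\<rat> \<inter> {0..}. dist r x < e"
        using \<open>0 \<le> x\<close> by (intro bexI[of _ r]) (auto simp: dist_real_def)
    qed
    then obtain q where q: "\<And>n. q n \<in> \<rat> \<inter> {0..}" "q \<longlonglongrightarrow> x"
      unfolding closure_sequential by blast
    have "continuous_on {0..} (\<lambda>z. z * y - Phi z)"
      by (intro continuous_intros cont)
    then have "(\<lambda>n. q n * y - Phi (q n)) \<longlonglongrightarrow> x * y - Phi x"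
      by (rule continuous_on_tendsto_compose[OF _ q(2)]) (use q(1) \<open>0 \<le> x\<close> in auto)
    then have "(\<lambda>n. ereal (q n * y - Phi (q n))) \<longlonglongrightarrow> ereal (x * y - Phi x)"
      by (rule tendsto_ereal)
    moreover have "ereal (q n * y - Phi (q n)) \<le> ?S" for n
      using q(1) by (rule SUP_upper)
    ultimately show ?thesis by (blast intro: LIMSEQ_le_const2)
  qed
  then show "Phi_ext_conj Phi y \<le> ?S"
    unfolding Phi_ext_conj_def by (intro SUP_least) (auto simp: Phi_ext_def)
qed

lemma borel_measurable_Phi_ext_conj:
  assumes "continuous_on {0..} Phi"
  shows "Phi_ext_conj Phi \<in> borel_measurable borel"
proof -
  have "(\<lambda>y. SUP q\<in>\<rat> \<inter> {0..}. ereal (q * y - Phi q)) \<in> borel_measurable borel"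
    by (intro borel_measurable_SUP) (auto intro: countable_Int1 countable_rat)
  moreover have "Phi_ext_conj Phi = (\<lambda>y. SUP q\<in>\<rat> \<inter> {0..}. ereal (q * y - Phi q))"
    by (rule ext) (rule Phi_ext_conj_eq_SUP_Rats[OF assms])
  ultimately show ?thesis by simp
qed

section \<open>Extended integrals and \<open>\<Phi>\<close>-divergences\<close>

lemma ennreal_integral_le_nn_integral:
  fixes h :: "'a \<Rightarrow> real"
  assumes "integrable M h"
  shows "ennreal (\<integral>x. h x \<partial>M) \<le> (\<integral>\<^sup>+x. ennreal (h x) \<partial>M)"
proof -
  have "ennreal (\<integral>x. h x \<partial>M) \<le> ennreal (\<integral>x. max (h x) 0 \<partial>M)"
    using assms by (intro ennreal_leI integral_mono) auto
  also have "\<dots> = (\<integral>\<^sup>+x. ennreal (max (h x) 0) \<partial>M)"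
    using assms by (intro nn_integral_eq_integral[symmetric]) auto
  finally show ?thesis by simp
qed

lemma e2ennreal_max_ereal_0 [simp]: "e2ennreal (max (ereal r) 0) = ennreal r"
  by (cases "0 \<le> r") (auto simp: max_def zero_ereal_def ennreal_neg)

lemma e2ennreal_add_ereal_parts:
  assumes "ereal (- c) \<le> a"
  shows "e2ennreal (a + ereal c) + e2ennreal (max (- a) 0) + ennreal (- c)
    = e2ennreal (max a 0) + ennreal c"
proof (cases a)
  case (real r)
  with assms have "0 \<le> r + c" by simp
  then have "ennreal (r + c) + ennreal (- r) + ennreal (- c) = ennreal r + ennreal c"
    by (cases "0 \<le> r"; cases "0 \<le> c")
      (simp_all add: ennreal_plus[symmetric] ennreal_neg del: ennreal_plus)
  then show ?thesis
    using real by simp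
qed (use assms in auto)

lemma integral_enn2real_eq_nn_integral:
  assumes [measurable]: "f \<in> borel_measurable M" and fin: "integral\<^sup>N M f < \<infinity>"
  shows "integrable M (\<lambda>x. enn2real (f x))"
    and "(\<integral>x. enn2real (f x) \<partial>M) = enn2real (integral\<^sup>N M f)"
proof -
  have "AE x in M. f x \<noteq> \<infinity>"
    using fin by (intro nn_integral_PInf_AE) auto
  then have eq: "(\<integral>\<^sup>+x. ennreal (enn2real (f x)) \<partial>M) = integral\<^sup>N M f"
    by (intro nn_integral_cong_AE) (auto simp: ennreal_enn2real_if)
  show "integrable M (\<lambda>x. enn2real (f x))"
    using fin by (intro integrableI_nonneg) (auto simp: eq)
  show "(\<integral>x. enn2real (f x) \<partial>M) = enn2real (integral\<^sup>N M f)"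
    by (subst integral_eq_nn_integral) (auto simp: eq)
qed

lemma ext_integral_add_const:
  assumes "prob_space M" and [measurable]: "F \<in> borel_measurable M"
    and lower: "\<And>x. x \<in> space M \<Longrightarrow> ereal (- c) \<le> F x"
  shows "enn2ereal (\<integral>\<^sup>+x. e2ennreal (F x + ereal c) \<partial>M) = ext_integral M F + ereal c"
proof -
  interpret prob_space M by fact
  define P where "P = (\<integral>\<^sup>+x. e2ennreal (max (F x) 0) \<partial>M)"
  define N where "N = (\<integral>\<^sup>+x. e2ennreal (max (- F x) 0) \<partial>M)"
  define I where "I = (\<integral>\<^sup>+x. e2ennreal (F x + ereal c) \<partial>M)"
  have pointwise: "e2ennreal (F x + ereal c) + e2ennreal (max (- F x) 0) + ennreal (- c)
      = e2ennreal (max (F x) 0) + ennreal c" if "x \<in> space M" for x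
    using lower[OF that] by (rule e2ennreal_add_ereal_parts)
  have "I + N + ennreal (- c) = (\<integral>\<^sup>+x. e2ennreal (F x + ereal c) + e2ennreal (max (- F x) 0) + ennreal (- c) \<partial>M)"
    unfolding I_def N_def by (simp add: nn_integral_add emeasure_space_1)
  also have "\<dots> = (\<integral>\<^sup>+x. e2ennreal (max (F x) 0) + ennreal c \<partial>M)"
    by (rule nn_integral_cong) (rule pointwise)
  also have "\<dots> = P + ennreal c"
    unfolding P_def by (simp add: nn_integral_add emeasure_space_1)
  finally have "I + N + ennreal (- c) = P + ennreal c" .
  moreover have "N \<le> ennreal c"
  proof -
    have "N \<le> (\<integral>\<^sup>+x. ennreal c \<partial>M)"
      unfolding N_def
    proof (rule nn_integral_mono)
      fix x assume "x \<in> space M"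
      then have "max (- F x) 0 \<le> max (ereal c) 0"
        using lower by (cases "F x") (fastforce simp: max_def)+
      then show "e2ennreal (max (- F x) 0) \<le> ennreal c"
        using e2ennreal_mono by fastforce
    qed
    then show ?thesis by (simp add: emeasure_space_1)
  qed
  ultimately show ?thesis
    unfolding ext_integral_def P_def[symmetric] N_def[symmetric] I_def[symmetric]
    by (cases "0 \<le> c"; cases I rule: ennreal_cases; cases P rule: ennreal_cases;
        cases N rule: ennreal_cases)
      (auto simp: ennreal_plus[symmetric] ennreal_neg top_unique zero_ennreal.rep_eq
        simp del: ennreal_plus)
qed

lemma ext_integral_eq_integral:
  fixes f :: "'a \<Rightarrow> real"
  assumes [measurable]: "f \<in> borel_measurable M"
    and neg: "integrable M (\<lambda>x. max (- f x) 0)"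
    and fin: "ext_integral M (\<lambda>x. ereal (f x)) \<noteq> \<infinity>"
  shows "integrable M f" and "ext_integral M (\<lambda>x. ereal (f x)) = ereal (\<integral>x. f x \<partial>M)"
proof -
  define P where "P = (\<integral>\<^sup>+x. ennreal (f x) \<partial>M)"
  have "(\<integral>\<^sup>+x. ennreal (- f x) \<partial>M) = ennreal (\<integral>x. max (- f x) 0 \<partial>M)"
    using nn_integral_eq_integral[OF neg] by simp
  then have ext: "ext_integral M (\<lambda>x. ereal (f x)) = enn2ereal P - ereal (\<integral>x. max (- f x) 0 \<partial>M)"
    unfolding ext_integral_def P_def by simp
  with fin have "P \<noteq> \<infinity>" by auto
  then have pos: "integrable M (\<lambda>x. max (f x) 0)"
    unfolding P_def by (intro integrableI_nonneg) (auto simp: top.not_eq_extremum)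
  have split: "(\<lambda>x. max (f x) 0 - max (- f x) 0) = f"
    by (auto simp: fun_eq_iff max_def)
  have "integrable M (\<lambda>x. max (f x) 0 - max (- f x) 0)"
    using pos neg by (rule Bochner_Integration.integrable_diff)
  then show "integrable M f" by (simp only: split)
  have "(\<integral>x. f x \<partial>M) = (\<integral>x. max (f x) 0 - max (- f x) 0 \<partial>M)"
    by (simp only: split)
  also have "\<dots> = (\<integral>x. max (f x) 0 \<partial>M) - (\<integral>x. max (- f x) 0 \<partial>M)"
    using pos neg by (rule Bochner_Integration.integral_diff)
  moreover have "P = ennreal (\<integral>x. max (f x) 0 \<partial>M)"
    using nn_integral_eq_integral[OF pos] unfolding P_def by simp
  ultimately show "ext_integral M (\<lambda>x. ereal (f x)) = ereal (\<integral>x. f x \<partial>M)"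
    by (simp add: ext)
qed

lemma Phi_div_finite:
  assumes Phi: "admissible_Phi Phi" and M: "prob_space M" and N: "prob_space N"
    and fin: "Phi_div Phi M N \<noteq> \<infinity>"
  shows "sets M = sets N" and "absolutely_continuous N M"
    and "integrable N (\<lambda>x. Phi (enn2real (RN_deriv N M x)))"
    and "Phi_div Phi M N = ereal (\<integral>x. Phi (enn2real (RN_deriv N M x)) \<partial>N)"
proof -
  interpret N: prob_space N by fact
  interpret M: prob_space M by fact
  show sets: "sets M = sets N" and ac: "absolutely_continuous N M"
    using fin unfolding Phi_div_def by (auto split: if_splits)
  define f where "f x = enn2real (RN_deriv N M x)" for x
  have f_meas: "f \<in> borel_measurable N"
    unfolding f_def by measurable
  have Phi_f_meas[measurable]: "(\<lambda>x. Phi (f x)) \<in> borel_measurable N"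
    using admissible_Phi_continuous_on[OF Phi] f_meas
    by (rule borel_measurable_comp_continuous_on_nonneg) (simp add: f_def)
  have "integrable N (\<lambda>x. f x * 1)"
    using N.RN_deriv_integrable[OF M.sigma_finite_measure_axioms ac sets, of "\<lambda>_. 1"]
    unfolding f_def by simp
  then have int_f: "integrable N f" by simp
  obtain c where "0 \<le> c" and c: "\<And>x. 0 \<le> x \<Longrightarrow> - Phi x \<le> c * (x + 1)"
    using admissible_Phi_lower_affine[OF Phi] by blast
  have neg: "integrable N (\<lambda>x. max (- Phi (f x)) 0)"
  proof (rule Bochner_Integration.integrable_bound)
    show "integrable N (\<lambda>x. c * (f x + 1))"
      using int_f by simp
    show "AE x in N. norm (max (- Phi (f x)) 0) \<le> norm (c * (f x + 1))"
      using c[of "f _"] \<open>0 \<le> c\<close> by (auto simp: f_def)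
  qed measurable
  have div_eq: "Phi_div Phi M N = ext_integral N (\<lambda>x. ereal (Phi (f x)))"
    using sets ac unfolding Phi_div_def f_def by simp
  note ext = ext_integral_eq_integral[OF Phi_f_meas neg fin[unfolded div_eq]]
  show "integrable N (\<lambda>x. Phi (enn2real (RN_deriv N M x)))"
    using ext(1) unfolding f_def .
  show "Phi_div Phi M N = ereal (\<integral>x. Phi (enn2real (RN_deriv N M x)) \<partial>N)"
    using ext(2) unfolding div_eq f_def .
qed

text \<open>
  Since \<open>\<Phi>\<^sup>*(y) \<ge> -\<Phi>(0)\<close>, the function \<open>\<Phi>\<^sup>* \<circ> g + \<Phi>(0)\<close> is nonnegative; its
  nonnegative integral stands for \<open>E\<^sub>N[\<Phi>\<^sup>* \<circ> g] + \<Phi>(0)\<close>.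
\<close>
lemma Phi_div_ge_variational:
  assumes Phi: "admissible_Phi Phi" and M: "prob_space M" and N: "prob_space N"
    and fin: "Phi_div Phi M N \<noteq> \<infinity>"
    and g_meas[measurable]: "g \<in> borel_measurable N" and int_g: "integrable M g"
    and conj_fin: "(\<integral>\<^sup>+x. e2ennreal (Phi_ext_conj Phi (g x) + ereal (Phi 0)) \<partial>N) < \<infinity>"
  shows "(\<integral>x. g x \<partial>M) + Phi 0
           - enn2real (\<integral>\<^sup>+x. e2ennreal (Phi_ext_conj Phi (g x) + ereal (Phi 0)) \<partial>N)
         \<le> real_of_ereal (Phi_div Phi M N)"
proof -
  interpret N: prob_space N by fact
  interpret M: prob_space M by fact
  note div = Phi_div_finite[OF Phi M N fin]
  define f where "f x = enn2real (RN_deriv N M x)" for x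
  have [measurable]: "Phi_ext_conj Phi \<in> borel_measurable borel"
    by (rule borel_measurable_Phi_ext_conj[OF admissible_Phi_continuous_on[OF Phi]])
  define Psi where "Psi x = e2ennreal (Phi_ext_conj Phi (g x) + ereal (Phi 0))" for x
  have [measurable]: "Psi \<in> borel_measurable N"
    unfolding Psi_def by measurable
  note psi = integral_enn2real_eq_nn_integral[of Psi, folded Psi_def, OF _ conj_fin[folded Psi_def]]
  have int_fg: "integrable N (\<lambda>x. f x * g x)"
    and E_g: "(\<integral>x. g x \<partial>M) = (\<integral>x. f x * g x \<partial>N)"
    using N.RN_deriv_integrable[OF M.sigma_finite_measure_axioms div(2,1) g_meas] int_g
      N.RN_deriv_integral[OF M.sigma_finite_measure_axioms div(2,1) g_meas]
    unfolding f_def by simp_all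
  have "AE x in N. Psi x \<noteq> \<infinity>"
    using conj_fin unfolding Psi_def[symmetric] by (intro nn_integral_PInf_AE) auto
  then have "AE x in N. f x * g x \<le> Phi (f x) + enn2real (Psi x) - Phi 0"
    unfolding Psi_def by eventually_elim (auto simp: f_def intro!: Phi_ext_conj_fenchel_young)
  then have "(\<integral>x. f x * g x \<partial>N) \<le> (\<integral>x. Phi (f x) + enn2real (Psi x) - Phi 0 \<partial>N)"
    using int_fg div(3) psi(1) unfolding f_def by (intro integral_mono_AE) auto
  also have "\<dots> = (\<integral>x. Phi (f x) \<partial>N) + enn2real (integral\<^sup>N N Psi) - Phi 0"
    using div(3) psi unfolding f_def by (simp add: N.prob_space)
  finally show ?thesis
    using E_g div(4) unfolding Psi_def f_def by simp
qed

lemma le_of_forall_le_add_small: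
  fixes x y K :: real
  assumes "\<And>d. 0 < d \<Longrightarrow> d \<le> 1 \<Longrightarrow> x \<le> y + d * K"
  shows "x \<le> y"
proof (rule field_le_epsilon)
  fix e :: real assume "0 < e"
  define d where "d = min 1 (e / (\<bar>K\<bar> + 1))"
  have "0 < d" "d \<le> 1"
    using \<open>0 < e\<close> by (auto simp: d_def)
  have "d * K \<le> d * \<bar>K\<bar>"
    using \<open>0 < d\<close> by (intro mult_left_mono) auto
  also have "\<dots> \<le> e / (\<bar>K\<bar> + 1) * \<bar>K\<bar>"
    by (intro mult_right_mono) (auto simp: d_def)
  also have "\<dots> \<le> e"
    using \<open>0 < e\<close> by (simp add: field_simps)
  finally show "x \<le> y + e"
    using assms[OF \<open>0 < d\<close> \<open>d \<le> 1\<close>] by simp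
qed

lemma square_le_of_forall_quadratic_le:
  fixes c D q :: real
  assumes "0 \<le> q" and quadratic: "\<And>t. t * c - D \<le> t\<^sup>2 * q / 2"
  shows "c\<^sup>2 \<le> 2 * D * q"
proof (cases "q = 0")
  case True
  have "c = 0"
  proof (rule ccontr)
    assume "c \<noteq> 0"
    then show False
      using quadratic[of "(D + 1) / c"] True by simp
  qed
  with True show ?thesis by simp
next
  case False
  with assms have "0 < q" by simp
  have "c / q * c - D \<le> (c / q)\<^sup>2 * q / 2"
    by (rule quadratic)
  with \<open>0 < q\<close> show ?thesis
    by (simp add: field_simps power2_eq_square)
qed

lemma onorm_matrix_le_of_bilinear_bound:
  fixes C :: "real^'n^'m" and S :: "real^'m^'m"
  assumes "0 \<le> B"
    and bound: "\<And>u v. (v \<bullet> (C *v u))\<^sup>2 \<le> B * (norm u)\<^sup>2 * (v \<bullet> (S *v v))"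
  shows "onorm (\<lambda>u. C *v u) \<le> sqrt (B * onorm (\<lambda>v. S *v v))"
proof (rule onorm_le)
  fix u :: "real^'n"
  define v where "v = C *v u"
  let ?s = "onorm (\<lambda>v. S *v v)"
  have "v \<bullet> (S *v v) \<le> norm v * norm (S *v v)"
    by (rule norm_cauchy_schwarz)
  also have "\<dots> \<le> norm v * (?s * norm v)"
    by (intro mult_left_mono onorm) simp_all
  finally have vSv: "v \<bullet> (S *v v) \<le> ?s * (norm v)\<^sup>2"
    by (simp add: power2_eq_square mult_ac)
  have "(norm v)\<^sup>2 * (norm v)\<^sup>2 = (v \<bullet> (C *v u))\<^sup>2"
    by (simp add: v_def dot_square_norm power2_eq_square)
  also have "\<dots> \<le> B * (norm u)\<^sup>2 * (v \<bullet> (S *v v))"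
    by (rule bound)
  also have "\<dots> \<le> B * (norm u)\<^sup>2 * (?s * (norm v)\<^sup>2)"
    using \<open>0 \<le> B\<close> by (intro mult_left_mono vSv) simp
  finally have quartic: "(norm v)\<^sup>2 * (norm v)\<^sup>2 \<le> (B * ?s * (norm u)\<^sup>2) * (norm v)\<^sup>2"
    by (simp add: mult_ac)
  have "(norm v)\<^sup>2 \<le> B * ?s * (norm u)\<^sup>2"
  proof (cases "v = 0")
    case True
    with \<open>0 \<le> B\<close> show ?thesis by (simp add: onorm_pos_le)
  next
    case False
    then have "0 < (norm v)\<^sup>2" by simp
    with quartic show ?thesis by (simp only: mult_le_cancel_right_pos)
  qed
  then have "norm v \<le> sqrt (B * ?s * (norm u)\<^sup>2)"
    by (simp add: real_le_rsqrt)
  then show "norm (C *v u) \<le> sqrt (B * onorm (\<lambda>v. S *v v)) * norm u"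
    by (simp add: v_def real_sqrt_mult)
qed

lemma floor_grid_bounds:
  fixes d x y :: real
  assumes "0 < d"
  shows "(d * \<lfloor>x / d\<rfloor>)\<^sup>2 \<le> x\<^sup>2 + d * (2 * \<bar>x\<bar> + d)"
    and "x * y \<le> d * \<lfloor>x / d\<rfloor> * y + d * \<bar>y\<bar>"
proof -
  have lower: "d * \<lfloor>x / d\<rfloor> \<le> x" and upper: "x < d * \<lfloor>x / d\<rfloor> + d"
    using floor_divide_lower[OF assms, of x] floor_divide_upper[OF assms, of x]
    by (simp_all add: algebra_simps)
  then have "\<bar>d * \<lfloor>x / d\<rfloor>\<bar> \<le> \<bar>\<bar>x\<bar> + d\<bar>"
    using assms by linarith
  then show "(d * \<lfloor>x / d\<rfloor>)\<^sup>2 \<le> x\<^sup>2 + d * (2 * \<bar>x\<bar> + d)"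
    by (simp only: abs_le_square_iff) (simp add: power2_sum algebra_simps power2_eq_square)
  have "\<bar>(x - d * \<lfloor>x / d\<rfloor>) * y\<bar> \<le> d * \<bar>y\<bar>"
    unfolding abs_mult using lower upper by (intro mult_right_mono) auto
  then show "x * y \<le> d * \<lfloor>x / d\<rfloor> * y + d * \<bar>y\<bar>"
    by (simp add: algebra_simps abs_le_iff)
qed

section \<open>Square-integrable random vectors\<close>

lemma integrable_square_dominated:
  fixes f h :: "'a \<Rightarrow> real"
  assumes "f \<in> borel_measurable M" and "integrable M h" and "\<And>x. x \<in> space M \<Longrightarrow> (f x)\<^sup>2 \<le> h x"
  shows "integrable M (\<lambda>x. (f x)\<^sup>2)"
proof (rule Bochner_Integration.integrable_bound[where f = h])
  have "norm ((f x)\<^sup>2) \<le> norm (h x)" if "x \<in> space M" for x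
    using assms(3)[OF that] abs_ge_self[of "h x"] by simp
  then show "AE x in M. norm ((f x)\<^sup>2) \<le> norm (h x)"
    by (rule AE_I2)
qed (use assms in auto)

lemma integrable_mult_of_square_integrable:
  fixes f g :: "'a \<Rightarrow> real"
  assumes "f \<in> borel_measurable M" "g \<in> borel_measurable M"
    and "integrable M (\<lambda>x. (f x)\<^sup>2)" "integrable M (\<lambda>x. (g x)\<^sup>2)"
  shows "integrable M (\<lambda>x. f x * g x)"
proof (rule Bochner_Integration.integrable_bound[where f = "\<lambda>x. (f x)\<^sup>2 + (g x)\<^sup>2"])
  have "\<bar>a * b\<bar> \<le> a\<^sup>2 + b\<^sup>2" for a b :: real
  proof -
    have "2 * (\<bar>a\<bar> * \<bar>b\<bar>) \<le> a\<^sup>2 + b\<^sup>2"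
      using sum_squares_bound[of "\<bar>a\<bar>" "\<bar>b\<bar>"] by (simp add: mult.assoc)
    moreover have "0 \<le> \<bar>a\<bar> * \<bar>b\<bar>" by simp
    ultimately have "\<bar>a\<bar> * \<bar>b\<bar> \<le> a\<^sup>2 + b\<^sup>2" by linarith
    then show ?thesis
      by (simp add: abs_mult)
  qed
  then show "AE x in M. norm (f x * g x) \<le> norm ((f x)\<^sup>2 + (g x)\<^sup>2)"
    by simp
qed (use assms in auto)

lemma (in finite_measure) square_integrable_norm_diff:
  fixes U :: "'a \<Rightarrow> 'b::euclidean_space"
  assumes [measurable]: "U \<in> borel_measurable M" and "integrable M (\<lambda>x. (norm (U x))\<^sup>2)"
  shows "integrable M (\<lambda>x. (norm (U x - c))\<^sup>2)"
proof (rule integrable_square_dominated)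
  show "integrable M (\<lambda>x. 2 * (norm (U x))\<^sup>2 + 2 * (norm c)\<^sup>2)"
    using assms by simp
  fix x
  have "(norm (U x - c))\<^sup>2 \<le> (norm (U x) + norm c)\<^sup>2"
    by (intro power_mono norm_triangle_ineq4) simp
  also have "\<dots> \<le> 2 * (norm (U x))\<^sup>2 + 2 * (norm c)\<^sup>2"
    using sum_squares_bound[of "norm (U x)" "norm c"] by (simp add: power2_sum)
  finally show "(norm (U x - c))\<^sup>2 \<le> 2 * (norm (U x))\<^sup>2 + 2 * (norm c)\<^sup>2" .
qed measurable

lemma (in finite_measure) square_integrable_inner:
  fixes U :: "'a \<Rightarrow> 'b::euclidean_space"
  assumes [measurable]: "U \<in> borel_measurable M" and "integrable M (\<lambda>x. (norm (U x))\<^sup>2)"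
  shows "integrable M (\<lambda>x. (v \<bullet> (U x - c))\<^sup>2)"
proof (rule integrable_square_dominated)
  show "integrable M (\<lambda>x. (norm v)\<^sup>2 * (norm (U x - c))\<^sup>2)"
    using square_integrable_norm_diff[OF assms] by simp
  show "(v \<bullet> (U x - c))\<^sup>2 \<le> (norm v)\<^sup>2 * (norm (U x - c))\<^sup>2" for x
  proof -
    have "\<bar>v \<bullet> (U x - c)\<bar> \<le> \<bar>norm v * norm (U x - c)\<bar>"
      using Cauchy_Schwarz_ineq2[of v "U x - c"] by simp
    then show ?thesis
      by (simp only: abs_le_square_iff power_mult_distrib)
  qed
qed measurable

lemma inner_mult_inner_eq_sum:
  fixes u v x y :: "real^'n"
  shows "(v \<bullet> x) * (u \<bullet> y) = (\<Sum>i\<in>UNIV. \<Sum>j\<in>UNIV. v$i * u$j * (x$i * y$j))"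
  unfolding inner_vec_def inner_real_def sum_product by (simp add: mult_ac)

lemma inner_matrix_vector_mult_eq_sum:
  fixes C :: "real^'m^'n"
  shows "v \<bullet> (C *v u) = (\<Sum>i\<in>UNIV. \<Sum>j\<in>UNIV. v$i * u$j * C$i$j)"
  by (simp add: inner_vec_def matrix_vector_mult_def sum_distrib_left mult_ac)

lemma inner_cross_cov:
  fixes M :: "('a \<times> 'b) measure" and U V :: "'a \<times> 'b \<Rightarrow> real^'n"
  assumes "finite_measure M"
    and [measurable]: "U \<in> borel_measurable M" "V \<in> borel_measurable M"
    and U2: "integrable M (\<lambda>z. (norm (U z))\<^sup>2)" and V2: "integrable M (\<lambda>z. (norm (V z))\<^sup>2)"
  shows "v \<bullet> (cross_cov M U V *v u)
    = (\<integral>z. (v \<bullet> (U z - (\<integral>w. U w \<partial>M))) * (u \<bullet> (V z - (\<integral>w. V w \<partial>M))) \<partial>M)"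
proof -
  interpret finite_measure M by fact
  define F where "F z = U z - (\<integral>w. U w \<partial>M)" for z
  define G where "G z = V z - (\<integral>w. V w \<partial>M)" for z
  have component: "x $ i = axis i 1 \<bullet> x" for x :: "real^'n" and i
    by (simp add: cart_eq_inner_axis inner_commute)
  have int: "integrable M (\<lambda>z. F z $ i * G z $ j)" for i j
    unfolding component F_def G_def
    by (intro integrable_mult_of_square_integrable square_integrable_inner U2 V2) measurable
  have "(\<integral>z. (v \<bullet> F z) * (u \<bullet> G z) \<partial>M)
      = (\<integral>z. (\<Sum>i\<in>UNIV. \<Sum>j\<in>UNIV. v$i * u$j * (F z $ i * G z $ j)) \<partial>M)"
    by (simp only: inner_mult_inner_eq_sum)
  also have "\<dots> = (\<Sum>i\<in>UNIV. \<Sum>j\<in>UNIV. v$i * u$j * (\<integral>z. F z $ i * G z $ j \<partial>M))"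
    using int by simp
  also have "\<dots> = (\<Sum>i\<in>UNIV. \<Sum>j\<in>UNIV. v$i * u$j * cross_cov M U V $ i $ j)"
    by (simp add: cross_cov_def F_def G_def)
  also have "\<dots> = v \<bullet> (cross_cov M U V *v u)"
    by (rule inner_matrix_vector_mult_eq_sum[symmetric])
  finally show ?thesis
    unfolding F_def G_def ..
qed

lemma (in prob_space) floor_grid_integral_bounds:
  fixes s w :: "'a \<Rightarrow> real" and d :: real
  assumes [measurable]: "s \<in> borel_measurable M" "w \<in> borel_measurable M"
    and s2: "integrable M (\<lambda>z. (s z)\<^sup>2)" and w2: "integrable M (\<lambda>z. (w z)\<^sup>2)"
    and "0 < d" "d \<le> 1"
  shows "integrable M (\<lambda>z. (d * \<lfloor>s z / d\<rfloor>)\<^sup>2)"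
    and "(\<integral>z. s z * w z \<partial>M) \<le> (\<integral>z. d * \<lfloor>s z / d\<rfloor> * w z \<partial>M) + d * (\<integral>z. \<bar>w z\<bar> \<partial>M)"
    and "(\<integral>z. (d * \<lfloor>s z / d\<rfloor>)\<^sup>2 \<partial>M) \<le> (\<integral>z. (s z)\<^sup>2 \<partial>M) + d * (2 * (\<integral>z. \<bar>s z\<bar> \<partial>M) + 1)"
proof -
  note grid = floor_grid_bounds[OF \<open>0 < d\<close>]
  have int_abs_s: "integrable M (\<lambda>z. \<bar>s z\<bar>)" and int_abs_w: "integrable M (\<lambda>z. \<bar>w z\<bar>)"
    using square_integrable_imp_integrable[OF _ s2] square_integrable_imp_integrable[OF _ w2]
    by simp_all
  show int_sd2: "integrable M (\<lambda>z. (d * \<lfloor>s z / d\<rfloor>)\<^sup>2)"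
    using s2 int_abs_s grid(1)
    by (intro integrable_square_dominated[where h = "\<lambda>z. (s z)\<^sup>2 + d * (2 * \<bar>s z\<bar> + d)"]) auto
  have int_sdw: "integrable M (\<lambda>z. d * \<lfloor>s z / d\<rfloor> * w z)"
    using int_sd2 w2 by (intro integrable_mult_of_square_integrable) auto
  have "(\<integral>z. s z * w z \<partial>M) \<le> (\<integral>z. d * \<lfloor>s z / d\<rfloor> * w z + d * \<bar>w z\<bar> \<partial>M)"
    using integrable_mult_of_square_integrable[OF _ _ s2 w2] int_sdw int_abs_w grid(2)
    by (intro integral_mono) auto
  then show "(\<integral>z. s z * w z \<partial>M) \<le> (\<integral>z. d * \<lfloor>s z / d\<rfloor> * w z \<partial>M) + d * (\<integral>z. \<bar>w z\<bar> \<partial>M)"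
    using int_sdw int_abs_w by simp
  have "(\<integral>z. (d * \<lfloor>s z / d\<rfloor>)\<^sup>2 \<partial>M) \<le> (\<integral>z. (s z)\<^sup>2 + d * (2 * \<bar>s z\<bar> + d) \<partial>M)"
    using int_sd2 s2 int_abs_s grid(1) by (intro integral_mono) auto
  also have "\<dots> = (\<integral>z. (s z)\<^sup>2 \<partial>M) + d * (2 * (\<integral>z. \<bar>s z\<bar> \<partial>M) + d)"
    using s2 int_abs_s by (simp add: prob_space algebra_simps)
  also have "\<dots> \<le> (\<integral>z. (s z)\<^sup>2 \<partial>M) + d * (2 * (\<integral>z. \<bar>s z\<bar> \<partial>M) + 1)"
    using \<open>0 < d\<close> \<open>d \<le> 1\<close> by (intro add_left_mono mult_left_mono) auto
  finally show "(\<integral>z. (d * \<lfloor>s z / d\<rfloor>)\<^sup>2 \<partial>M) \<le> (\<integral>z. (s z)\<^sup>2 \<partial>M) + d * (2 * (\<integral>z. \<bar>s z\<bar> \<partial>M) + 1)" .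
qed

section \<open>The decoupling inequality\<close>

locale Phi_subgaussian_coupling = prob_space rho
  for rho :: "((real^'d) \<times> (real^'d)) measure" +
  fixes Phi :: "real \<Rightarrow> real" and xi :: real
  assumes admissible: "admissible_Phi Phi"
    and sets_rho [measurable_cong]: "sets rho = sets borel"
    and snd_square_integrable: "integrable rho (\<lambda>z. (norm (snd z))\<^sup>2)"
    and subgaussian: "\<forall>\<theta>::real^'d.
       (INF a\<in>(UNIV::real set).
          ext_integral (distr rho borel snd)
            (\<lambda>y. Phi_ext_conj Phi (\<theta> \<bullet> (y - (\<integral>z. snd z \<partial>rho)) - a)) + ereal a)
       \<le> ereal ((norm \<theta>)\<^sup>2 * xi\<^sup>2 / 2)"
    and MI_finite: "Phi_MI Phi rho \<noteq> \<infinity>"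
begin

definition "PX = distr rho borel fst"
definition "PY = distr rho borel snd"
definition "PXY = PX \<Otimes>\<^sub>M PY"
definition "mean_Y = (\<integral>z. snd z \<partial>rho)"
definition "mi = real_of_ereal (Phi_MI Phi rho)"

lemma measurable_fst_borel [measurable]:
    "fst \<in> borel_measurable (borel :: ((real^'d) \<times> (real^'d)) measure)"
  and measurable_snd_borel [measurable]:
    "snd \<in> borel_measurable (borel :: ((real^'d) \<times> (real^'d)) measure)"
  by (intro borel_measurable_continuous_onI continuous_intros)+

lemma measurable_fst [measurable]: "fst \<in> borel_measurable rho"
  and measurable_snd [measurable]: "snd \<in> borel_measurable rho"
  by (simp_all add: measurable_cong_sets[OF sets_rho refl])

lemma measurable_Phi_ext_conj [measurable]: "Phi_ext_conj Phi \<in> borel_measurable borel"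
  by (rule borel_measurable_Phi_ext_conj[OF admissible_Phi_continuous_on[OF admissible]])

lemma prob_space_PX: "prob_space PX"
  and prob_space_PY: "prob_space PY"
  unfolding PX_def PY_def by (simp_all add: prob_space_distr)

lemma sets_PX [measurable_cong]: "sets PX = sets borel"
  and sets_PY [measurable_cong]: "sets PY = sets borel"
  unfolding PX_def PY_def by simp_all

lemma prob_space_PXY: "prob_space PXY"
proof -
  interpret pair_prob_space PX PY
    using prob_space_PX prob_space_PY
    by (simp add: pair_prob_space_def pair_sigma_finite_def prob_space_imp_sigma_finite)
  show ?thesis unfolding PXY_def by unfold_locales
qed

lemma sets_PXY [measurable_cong]: "sets PXY = sets borel"
proof -
  have "sets PXY = sets (borel \<Otimes>\<^sub>M borel :: ((real^'d) \<times> (real^'d)) measure)"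
    unfolding PXY_def by (rule sets_pair_measure_cong[OF sets_PX sets_PY])
  then show ?thesis by (simp only: borel_prod)
qed

lemma Phi_MI_eq_Phi_div: "Phi_MI Phi rho = Phi_div Phi rho PXY"
  unfolding Phi_MI_def PXY_def PX_def PY_def ..

lemma square_integrable_inner_snd: "integrable rho (\<lambda>z. (\<theta> \<bullet> (snd z - mean_Y))\<^sup>2)"
  by (rule square_integrable_inner[OF measurable_snd snd_square_integrable])

lemma integrable_inner_snd_PY: "integrable PY (\<lambda>y. \<theta> \<bullet> (y - mean_Y))"
  using square_integrable_imp_integrable[OF _ square_integrable_inner_snd]
  unfolding PY_def by (subst integrable_distr_eq) auto

lemma integral_inner_snd_PY: "(\<integral>y. \<theta> \<bullet> (y - mean_Y) \<partial>PY) = 0"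
proof -
  have "integrable rho snd"
    using square_integrable_imp_integrable[OF _ snd_square_integrable]
    by (intro integrable_norm_cancel[of _ snd]) auto
  then have "(\<integral>z. \<theta> \<bullet> (snd z - mean_Y) \<partial>rho) = \<theta> \<bullet> (mean_Y - mean_Y)"
    unfolding mean_Y_def by (simp add: prob_space)
  then show ?thesis
    unfolding PY_def by (simp add: integral_distr)
qed

text \<open>Integrating \<open>\<Phi>\<^sup>*(y) \<ge> 2 y - \<Phi>(2)\<close>.\<close>
lemma nn_integral_conj_shift_ge:
  "ennreal (Phi 0 - Phi 2 - 2 * a)
     \<le> (\<integral>\<^sup>+y. e2ennreal (Phi_ext_conj Phi (\<theta> \<bullet> (y - mean_Y) - a) + ereal (Phi 0)) \<partial>PY)"
proof -
  interpret PY: prob_space PY by (rule prob_space_PY)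
  define w where "w y = \<theta> \<bullet> (y - mean_Y)" for y
  have "(\<integral>y. 2 * w y + (Phi 0 - Phi 2 - 2 * a) \<partial>PY) = Phi 0 - Phi 2 - 2 * a"
    using integrable_inner_snd_PY[of \<theta>] integral_inner_snd_PY[of \<theta>]
    unfolding w_def[symmetric] by (simp add: PY.prob_space)
  moreover have "integrable PY (\<lambda>y. 2 * w y + (Phi 0 - Phi 2 - 2 * a))"
    using integrable_inner_snd_PY[of \<theta>] unfolding w_def[symmetric] by simp
  ultimately have "ennreal (Phi 0 - Phi 2 - 2 * a) \<le> (\<integral>\<^sup>+y. ennreal (2 * w y + (Phi 0 - Phi 2 - 2 * a)) \<partial>PY)"
    by (metis ennreal_integral_le_nn_integral)
  also have "\<dots> \<le> (\<integral>\<^sup>+y. e2ennreal (Phi_ext_conj Phi (w y - a) + ereal (Phi 0)) \<partial>PY)"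
  proof (rule nn_integral_mono)
    fix y
    have "ereal (2 * (w y - a) - Phi 2) \<le> Phi_ext_conj Phi (w y - a)"
      by (rule Phi_ext_conj_ge) simp
    then have "ereal (2 * w y + (Phi 0 - Phi 2 - 2 * a)) \<le> Phi_ext_conj Phi (w y - a) + ereal (Phi 0)"
      by (cases "Phi_ext_conj Phi (w y - a)") (auto simp: algebra_simps)
    then show "ennreal (2 * w y + (Phi 0 - Phi 2 - 2 * a))
        \<le> e2ennreal (Phi_ext_conj Phi (w y - a) + ereal (Phi 0))"
      using e2ennreal_mono by fastforce
  qed
  finally show ?thesis unfolding w_def .
qed

text \<open>
  The bound on \<open>\<bar>a\<bar>\<close> is what later makes the chosen shifts integrable.
\<close>
lemma conj_shift_bounds:
  assumes shift: "ext_integral PY (\<lambda>y. Phi_ext_conj Phi (\<theta> \<bullet> (y - mean_Y) - a)) + ereal a < ereal R"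
    and "0 \<le> R"
  shows "(\<integral>\<^sup>+y. e2ennreal (Phi_ext_conj Phi (\<theta> \<bullet> (y - mean_Y) - a) + ereal (Phi 0)) \<partial>PY)
           \<le> ennreal (R - a + Phi 0)"
    and "0 \<le> R - a + Phi 0"
    and "\<bar>a\<bar> \<le> R + \<bar>Phi 0\<bar> + \<bar>Phi 2\<bar>"
proof -
  define F where "F y = Phi_ext_conj Phi (\<theta> \<bullet> (y - mean_Y) - a)" for y
  define I where "I = (\<integral>\<^sup>+y. e2ennreal (F y + ereal (Phi 0)) \<partial>PY)"
  have "enn2ereal I = ext_integral PY F + ereal (Phi 0)"
    unfolding I_def F_def using prob_space_PY
    by (rule ext_integral_add_const) (use Phi_ext_conj_ge[of 0 _ Phi] in auto)
  with shift have I_less: "enn2ereal I < ereal (R - a + Phi 0)"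
    unfolding F_def[symmetric] by (cases "ext_integral PY F") (auto simp: enn2ereal_nonneg)
  show nonneg: "0 \<le> R - a + Phi 0"
    using le_less_trans[OF enn2ereal_nonneg I_less] by simp
  show I_le: "(\<integral>\<^sup>+y. e2ennreal (Phi_ext_conj Phi (\<theta> \<bullet> (y - mean_Y) - a) + ereal (Phi 0)) \<partial>PY)
      \<le> ennreal (R - a + Phi 0)"
    using I_less nonneg unfolding F_def[symmetric] I_def[symmetric]
    by (simp add: less_eq_ennreal.rep_eq)
  have "ennreal (Phi 0 - Phi 2 - 2 * a) \<le> ennreal (R - a + Phi 0)"
    using nn_integral_conj_shift_ge I_le by (rule order_trans)
  then have "Phi 0 - Phi 2 - 2 * a \<le> 0 \<or> Phi 0 - Phi 2 - 2 * a \<le> R - a + Phi 0"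
    by (cases "0 < Phi 0 - Phi 2 - 2 * a") (auto simp: ennreal_le_iff2)
  with nonneg \<open>0 \<le> R\<close> show "\<bar>a\<bar> \<le> R + \<bar>Phi 0\<bar> + \<bar>Phi 2\<bar>"
    by linarith
qed

lemma exists_good_shifts:
  assumes "0 < e"
  obtains A :: "real^'d \<Rightarrow> real" where
    "\<And>\<theta>. (\<integral>\<^sup>+y. e2ennreal (Phi_ext_conj Phi (\<theta> \<bullet> (y - mean_Y) - A \<theta>) + ereal (Phi 0)) \<partial>PY)
       \<le> ennreal ((norm \<theta>)\<^sup>2 * xi\<^sup>2 / 2 + e - A \<theta> + Phi 0)"
    and "\<And>\<theta>. 0 \<le> (norm \<theta>)\<^sup>2 * xi\<^sup>2 / 2 + e - A \<theta> + Phi 0"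
    and "\<And>\<theta>. \<bar>A \<theta>\<bar> \<le> (norm \<theta>)\<^sup>2 * xi\<^sup>2 / 2 + e + \<bar>Phi 0\<bar> + \<bar>Phi 2\<bar>"
proof -
  have "\<exists>a. ext_integral PY (\<lambda>y. Phi_ext_conj Phi (\<theta> \<bullet> (y - mean_Y) - a)) + ereal a
             < ereal ((norm \<theta>)\<^sup>2 * xi\<^sup>2 / 2 + e)" for \<theta>
  proof -
    have "(INF a\<in>UNIV. ext_integral PY (\<lambda>y. Phi_ext_conj Phi (\<theta> \<bullet> (y - mean_Y) - a)) + ereal a)
        < ereal ((norm \<theta>)\<^sup>2 * xi\<^sup>2 / 2 + e)"
      using subgaussian \<open>0 < e\<close> unfolding PY_def mean_Y_def by (auto intro: le_less_trans)
    then show ?thesis by (simp add: INF_less_iff)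
  qed
  then obtain A where A_lt: "\<And>\<theta>. ext_integral PY (\<lambda>y. Phi_ext_conj Phi (\<theta> \<bullet> (y - mean_Y) - A \<theta>))
      + ereal (A \<theta>) < ereal ((norm \<theta>)\<^sup>2 * xi\<^sup>2 / 2 + e)"
    by metis
  have R_nonneg: "0 \<le> (norm \<theta>)\<^sup>2 * xi\<^sup>2 / 2 + e" for \<theta>
    using \<open>0 < e\<close> by simp
  show ?thesis
    by (rule that; rule conj_shift_bounds[OF A_lt R_nonneg])
qed

lemma nn_integral_PXY_le_fibrewise:
  fixes H :: "real^'d \<Rightarrow> real"
  assumes [measurable]: "f \<in> borel_measurable PXY" "H \<in> borel_measurable borel"
    and "\<And>x. 0 \<le> H x" and "integrable rho (\<lambda>z. H (fst z))"
    and fibre: "\<And>x. (\<integral>\<^sup>+y. f (x, y) \<partial>PY) \<le> ennreal (H x)"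
  shows "(\<integral>\<^sup>+z. f z \<partial>PXY) \<le> ennreal (\<integral>z. H (fst z) \<partial>rho)"
proof -
  interpret PY: prob_space PY by (rule prob_space_PY)
  have "(\<integral>\<^sup>+z. f z \<partial>PXY) = (\<integral>\<^sup>+x. \<integral>\<^sup>+y. f (x, y) \<partial>PY \<partial>PX)"
    unfolding PXY_def by (rule PY.nn_integral_fst[symmetric]) (simp add: PXY_def[symmetric])
  also have "\<dots> \<le> (\<integral>\<^sup>+x. ennreal (H x) \<partial>PX)"
    by (intro nn_integral_mono fibre)
  also have "\<dots> = ennreal (\<integral>x. H x \<partial>PX)"
    using assms(3,4) unfolding PX_def
    by (intro nn_integral_eq_integral) (auto simp: integrable_distr_eq)
  finally show ?thesis
    unfolding PX_def by (simp add: integral_distr)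
qed

lemma Phi_MI_ge_linear_test:
  fixes \<Theta> :: "real^'d \<Rightarrow> real^'d" and A H :: "real^'d \<Rightarrow> real"
  assumes [measurable]: "\<Theta> \<in> borel_measurable borel" "A \<in> borel_measurable borel"
      "H \<in> borel_measurable borel"
    and H_nonneg: "\<And>x. 0 \<le> H x"
    and int_test: "integrable rho (\<lambda>z. \<Theta> (fst z) \<bullet> (snd z - mean_Y))"
    and int_A: "integrable rho (\<lambda>z. A (fst z))" and int_H: "integrable rho (\<lambda>z. H (fst z))"
    and fibre: "\<And>x. (\<integral>\<^sup>+y. e2ennreal (Phi_ext_conj Phi (\<Theta> x \<bullet> (y - mean_Y) - A x) + ereal (Phi 0)) \<partial>PY)
                  \<le> ennreal (H x)"
  shows "(\<integral>z. \<Theta> (fst z) \<bullet> (snd z - mean_Y) \<partial>rho) - (\<integral>z. A (fst z) \<partial>rho) + Phi 0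
           - (\<integral>z. H (fst z) \<partial>rho) \<le> mi"
proof -
  define g where "g z = \<Theta> (fst z) \<bullet> (snd z - mean_Y) - A (fst z)" for z
  define Psi where "Psi z = e2ennreal (Phi_ext_conj Phi (g z) + ereal (Phi 0))" for z
  have g_meas: "g \<in> borel_measurable PXY"
    unfolding g_def by measurable
  have Psi_le: "(\<integral>\<^sup>+z. Psi z \<partial>PXY) \<le> ennreal (\<integral>z. H (fst z) \<partial>rho)"
    using g_meas H_nonneg int_H fibre unfolding Psi_def
    by (intro nn_integral_PXY_le_fibrewise) (simp_all add: g_def)
  have "(\<integral>z. g z \<partial>rho) + Phi 0 - enn2real (\<integral>\<^sup>+z. Psi z \<partial>PXY) \<le> mi"
    unfolding Psi_def mi_def Phi_MI_eq_Phi_div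
  proof (rule Phi_div_ge_variational[OF admissible prob_space_axioms prob_space_PXY _ g_meas])
    show "Phi_div Phi rho PXY \<noteq> \<infinity>"
      using MI_finite unfolding Phi_MI_eq_Phi_div .
    show "integrable rho g"
      unfolding g_def using int_test int_A by simp
    show "(\<integral>\<^sup>+z. e2ennreal (Phi_ext_conj Phi (g z) + ereal (Phi 0)) \<partial>PXY) < \<infinity>"
      using Psi_le unfolding Psi_def by (simp add: le_less_trans)
  qed
  moreover have "enn2real (\<integral>\<^sup>+z. Psi z \<partial>PXY) \<le> (\<integral>z. H (fst z) \<partial>rho)"
    using enn2real_mono[OF Psi_le] H_nonneg by (simp add: Bochner_Integration.integral_nonneg)
  moreover have "(\<integral>z. g z \<partial>rho) = (\<integral>z. \<Theta> (fst z) \<bullet> (snd z - mean_Y) \<partial>rho) - (\<integral>z. A (fst z) \<partial>rho)"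
    unfolding g_def using int_test int_A by simp
  ultimately show ?thesis by simp
qed

text \<open>
  For \<open>t = \<tau> \<circ> k\<close> with \<open>k\<close> integer-valued, the near-optimal shifts only have to be
  chosen for countably many \<open>\<theta> = \<tau>(j) u\<close>, so \<open>x \<mapsto> A(\<tau>(k x) u)\<close> is measurable.
\<close>
lemma decoupling_bound_countable:
  fixes k :: "real^'d \<Rightarrow> int" and \<tau> :: "int \<Rightarrow> real"
  assumes k_meas [measurable]: "k \<in> measurable borel (count_space UNIV)"
    and square_int: "integrable rho (\<lambda>z. (\<tau> (k (fst z)))\<^sup>2)"
  shows "(\<integral>z. \<tau> (k (fst z)) * (u \<bullet> (snd z - mean_Y)) \<partial>rho) - mi
           \<le> xi\<^sup>2 * (norm u)\<^sup>2 / 2 * (\<integral>z. (\<tau> (k (fst z)))\<^sup>2 \<partial>rho)"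
proof (rule field_le_epsilon)
  fix e :: real assume "0 < e"
  obtain A where A: "\<And>\<theta>. (\<integral>\<^sup>+y. e2ennreal (Phi_ext_conj Phi (\<theta> \<bullet> (y - mean_Y) - A \<theta>) + ereal (Phi 0)) \<partial>PY)
       \<le> ennreal ((norm \<theta>)\<^sup>2 * xi\<^sup>2 / 2 + e - A \<theta> + Phi 0)"
    "\<And>\<theta>. 0 \<le> (norm \<theta>)\<^sup>2 * xi\<^sup>2 / 2 + e - A \<theta> + Phi 0"
    "\<And>\<theta>. \<bar>A \<theta>\<bar> \<le> (norm \<theta>)\<^sup>2 * xi\<^sup>2 / 2 + e + \<bar>Phi 0\<bar> + \<bar>Phi 2\<bar>"
    using exists_good_shifts[OF \<open>0 < e\<close>] by blast
  define q where "q = xi\<^sup>2 * (norm u)\<^sup>2 / 2"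
  define a where "a j = A (\<tau> j *\<^sub>R u)" for j
  define R where "R j = q * (\<tau> j)\<^sup>2 + e" for j
  have norm_\<tau>u: "(norm (\<tau> j *\<^sub>R u))\<^sup>2 * xi\<^sup>2 / 2 = q * (\<tau> j)\<^sup>2" for j
    by (simp add: q_def power_mult_distrib)
  have fibre: "(\<integral>\<^sup>+y. e2ennreal (Phi_ext_conj Phi ((\<tau> j *\<^sub>R u) \<bullet> (y - mean_Y) - a j) + ereal (Phi 0)) \<partial>PY)
      \<le> ennreal (R j - a j + Phi 0)"
    and nonneg: "0 \<le> R j - a j + Phi 0"
    and bound: "\<bar>a j\<bar> \<le> R j + \<bar>Phi 0\<bar> + \<bar>Phi 2\<bar>" for j
    using A[of "\<tau> j *\<^sub>R u"] by (simp_all only: norm_\<tau>u a_def R_def)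
  have int_R: "integrable rho (\<lambda>z. R (k (fst z)))"
    unfolding R_def using square_int by simp
  have int_a: "integrable rho (\<lambda>z. a (k (fst z)))"
  proof (rule Bochner_Integration.integrable_bound)
    show "integrable rho (\<lambda>z. R (k (fst z)) + \<bar>Phi 0\<bar> + \<bar>Phi 2\<bar>)"
      using int_R by simp
    show "AE z in rho. norm (a (k (fst z))) \<le> norm (R (k (fst z)) + \<bar>Phi 0\<bar> + \<bar>Phi 2\<bar>)"
      using bound by (auto intro!: AE_I2 order_trans[OF _ abs_ge_self])
  qed measurable
  have int_test: "integrable rho (\<lambda>z. (\<tau> (k (fst z)) *\<^sub>R u) \<bullet> (snd z - mean_Y))"
    using integrable_mult_of_square_integrable[OF _ _ square_int square_integrable_inner_snd[of u]]
    by simp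
  have "(\<integral>z. (\<tau> (k (fst z)) *\<^sub>R u) \<bullet> (snd z - mean_Y) \<partial>rho) - (\<integral>z. a (k (fst z)) \<partial>rho) + Phi 0
      - (\<integral>z. R (k (fst z)) - a (k (fst z)) + Phi 0 \<partial>rho) \<le> mi"
    using fibre nonneg int_test int_a int_R by (intro Phi_MI_ge_linear_test) simp_all
  moreover have "(\<integral>z. R (k (fst z)) - a (k (fst z)) + Phi 0 \<partial>rho)
      = q * (\<integral>z. (\<tau> (k (fst z)))\<^sup>2 \<partial>rho) + e - (\<integral>z. a (k (fst z)) \<partial>rho) + Phi 0"
    unfolding R_def using square_int int_a by (simp add: prob_space)
  ultimately show "(\<integral>z. \<tau> (k (fst z)) * (u \<bullet> (snd z - mean_Y)) \<partial>rho) - mi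
      \<le> xi\<^sup>2 * (norm u)\<^sup>2 / 2 * (\<integral>z. (\<tau> (k (fst z)))\<^sup>2 \<partial>rho) + e"
    unfolding q_def by simp
qed

lemma decoupling_bound:
  fixes t :: "real^'d \<Rightarrow> real"
  assumes [measurable]: "t \<in> borel_measurable borel"
    and square_int: "integrable rho (\<lambda>z. (t (fst z))\<^sup>2)"
  shows "(\<integral>z. t (fst z) * (u \<bullet> (snd z - mean_Y)) \<partial>rho) - mi
           \<le> xi\<^sup>2 * (norm u)\<^sup>2 / 2 * (\<integral>z. (t (fst z))\<^sup>2 \<partial>rho)"
proof (rule le_of_forall_le_add_small)
  fix d :: real assume "0 < d" "d \<le> 1"
  define q where "q = xi\<^sup>2 * (norm u)\<^sup>2 / 2"
  define w where "w z = u \<bullet> (snd z - mean_Y)" for z :: "(real^'d) \<times> (real^'d)"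
  define s where "s z = t (fst z)" for z :: "(real^'d) \<times> (real^'d)"
  have s_meas: "s \<in> borel_measurable rho" and w_meas: "w \<in> borel_measurable rho"
    unfolding w_def s_def by measurable
  have "integrable rho (\<lambda>z. (s z)\<^sup>2)" and "integrable rho (\<lambda>z. (w z)\<^sup>2)"
    unfolding s_def w_def by (fact square_int square_integrable_inner_snd)+
  note grid = floor_grid_integral_bounds[OF s_meas w_meas this \<open>0 < d\<close> \<open>d \<le> 1\<close>]
  have "(\<integral>z. d * \<lfloor>s z / d\<rfloor> * w z \<partial>rho) - mi \<le> q * (\<integral>z. (d * \<lfloor>s z / d\<rfloor>)\<^sup>2 \<partial>rho)"
    using decoupling_bound_countable[where k = "\<lambda>x. \<lfloor>t x / d\<rfloor>" and \<tau> = "\<lambda>j. d * j" and u = u]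
      grid(1)
    unfolding q_def s_def w_def by simp
  moreover have "q * (\<integral>z. (d * \<lfloor>s z / d\<rfloor>)\<^sup>2 \<partial>rho)
      \<le> q * ((\<integral>z. (s z)\<^sup>2 \<partial>rho) + d * (2 * (\<integral>z. \<bar>s z\<bar> \<partial>rho) + 1))"
    using grid(3) by (rule mult_left_mono) (simp add: q_def)
  ultimately have "(\<integral>z. s z * w z \<partial>rho) - mi \<le> q * (\<integral>z. (s z)\<^sup>2 \<partial>rho)
      + d * ((\<integral>z. \<bar>w z\<bar> \<partial>rho) + q * (2 * (\<integral>z. \<bar>s z\<bar> \<partial>rho) + 1))"
    using grid(2) by (simp add: algebra_simps)
  then show "(\<integral>z. t (fst z) * (u \<bullet> (snd z - mean_Y)) \<partial>rho) - mi
      \<le> xi\<^sup>2 * (norm u)\<^sup>2 / 2 * (\<integral>z. (t (fst z))\<^sup>2 \<partial>rho)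
        + d * ((\<integral>z. \<bar>u \<bullet> (snd z - mean_Y)\<bar> \<partial>rho)
               + xi\<^sup>2 * (norm u)\<^sup>2 / 2 * (2 * (\<integral>z. \<bar>t (fst z)\<bar> \<partial>rho) + 1))"
    unfolding q_def s_def w_def .
qed

lemma mi_nonneg: "0 \<le> mi"
  using decoupling_bound[of "\<lambda>_. 0"] by simp

lemma inner_cross_cov_square_le:
  assumes fst_square_int: "integrable rho (\<lambda>z. (norm (fst z))\<^sup>2)"
  shows "(v \<bullet> (cross_cov rho fst snd *v u))\<^sup>2
           \<le> 2 * xi\<^sup>2 * mi * (norm u)\<^sup>2 * (v \<bullet> (cross_cov rho fst fst *v v))"
proof -
  define mean_X where "mean_X = (\<integral>z. fst z \<partial>rho)"
  define s where "s z = v \<bullet> (fst z - mean_X)" for z :: "(real^'d) \<times> (real^'d)"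
  have cov_XY: "v \<bullet> (cross_cov rho fst snd *v u) = (\<integral>z. s z * (u \<bullet> (snd z - mean_Y)) \<partial>rho)"
    unfolding s_def mean_X_def mean_Y_def
    using fst_square_int snd_square_integrable by (intro inner_cross_cov finite_measure_axioms) simp_all
  have cov_XX: "v \<bullet> (cross_cov rho fst fst *v v) = (\<integral>z. (s z)\<^sup>2 \<partial>rho)"
    unfolding s_def mean_X_def power2_eq_square
    using fst_square_int by (intro inner_cross_cov finite_measure_axioms) simp_all
  have int_s2: "integrable rho (\<lambda>z. (s z)\<^sup>2)"
    unfolding s_def using fst_square_int by (intro square_integrable_inner) simp_all
  have "t * (\<integral>z. s z * (u \<bullet> (snd z - mean_Y)) \<partial>rho) - mi
      \<le> t\<^sup>2 * (xi\<^sup>2 * (norm u)\<^sup>2 * (\<integral>z. (s z)\<^sup>2 \<partial>rho)) / 2" for t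
    using decoupling_bound[of "\<lambda>x. t * (v \<bullet> (x - mean_X))" u] int_s2
    by (simp add: s_def power_mult_distrib mult.assoc mult_ac)
  then have "(\<integral>z. s z * (u \<bullet> (snd z - mean_Y)) \<partial>rho)\<^sup>2
      \<le> 2 * mi * (xi\<^sup>2 * (norm u)\<^sup>2 * (\<integral>z. (s z)\<^sup>2 \<partial>rho))"
    by (intro square_le_of_forall_quadratic_le) simp_all
  then show ?thesis
    unfolding cov_XY cov_XX by (simp add: mult_ac)
qed

end

theorem mainTheorem10:
  fixes Phi :: "real \<Rightarrow> real"
    and rho :: "((real^'d) \<times> (real^'d)) measure"
    and xi :: real
  assumes Phi: "admissible_Phi Phi"
    and prob: "prob_space rho"
    and sets_rho: "sets rho = sets borel"
    and intX: "integrable rho (\<lambda>z. (norm (fst z))\<^sup>2)"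
    and intY: "integrable rho (\<lambda>z. (norm (snd z))\<^sup>2)"
    and xi_pos: "0 < xi"
    and hyp: "\<forall>\<theta>::real^'d.
       (INF a\<in>(UNIV::real set).
          ext_integral (distr rho borel snd)
            (\<lambda>y. Phi_ext_conj Phi (\<theta> \<bullet> (y - (\<integral>z. snd z \<partial>rho)) - a)) + ereal a)
       \<le> ereal ((norm \<theta>)\<^sup>2 * xi\<^sup>2 / 2)"
  shows "Phi_MI Phi rho \<noteq> \<infinity> \<longrightarrow>
    onorm (\<lambda>v. cross_cov rho fst snd *v v)
      \<le> xi * sqrt (2 * onorm (\<lambda>v. cross_cov rho fst fst *v v) * real_of_ereal (Phi_MI Phi rho))"
proof
  assume "Phi_MI Phi rho \<noteq> \<infinity>"
  then interpret Phi_subgaussian_coupling rho Phi xi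
    using prob Phi sets_rho intY hyp
    by (simp add: Phi_subgaussian_coupling_def Phi_subgaussian_coupling_axioms_def)
  have "onorm (\<lambda>v. cross_cov rho fst snd *v v)
      \<le> sqrt (2 * xi\<^sup>2 * mi * onorm (\<lambda>v. cross_cov rho fst fst *v v))"
    using mi_nonneg by (intro onorm_matrix_le_of_bilinear_bound inner_cross_cov_square_le intX) simp
  also have "\<dots> = xi * sqrt (2 * onorm (\<lambda>v. cross_cov rho fst fst *v v) * real_of_ereal (Phi_MI Phi rho))"
    using xi_pos by (simp add: mi_def real_sqrt_mult mult_ac)
  finally show "onorm (\<lambda>v. cross_cov rho fst snd *v v)
      \<le> xi * sqrt (2 * onorm (\<lambda>v. cross_cov rho fst fst *v v) * real_of_ereal (Phi_MI Phi rho))" .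
qed

end
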